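(* Let $n,m\ge1$, $\vec x,\vec y\in\hat N^n$ and $\vec a,\vec b\in\hat N^m$. Then, for the componentwise order, (i) $\vec x\tilde\ltimes\vec a<\vec x\tilde\ltimes\vec b$ if and only if $\vec a<\vec b$; (ii) $\vec x\tilde\ltimes\vec a<\vec y\tilde\ltimes\vec a$ if and only if $\vec x<\vec y$.
   Context: $\hat N^n$ ($n\ge1$) is the set of names of planar rooted binary trees with $n$ internal vertices and $\hat N^0=\{()\}$; recursively, every element of $\hat N^n$, $n\ge1$, is uniquely $\vec v_l\vee\vec v_r:=(\vec v_l,1,p+1+\vec v_r)$ with $\vec v_l\in\hat N^p,\vec v_r\in\hat N^q$, $p+q+1=n$, where $k+(w_1,\dots,w_q)=(w_1+k,\dots,w_q+k)$. For $\vec v\in\hat N^n,\vec w\in\hat N^m$: $\vec v\nearrow\vec w=(\vec v,n\triangleright w_1,\dots,n\triangleright w_m)$ with $n\triangleright a=a+n$ for $a\neq1$, $n\triangleright1=1$; $\vec v\nwarrow\vec w=(\vec v,n+\vec w)$; $()$ is a two-sided unit for both. $\varpi_{()}(\vec x)=()$ and $\varpi_{\vec v}(\vec x)=\varpi_{\vec v_l}(\vec x)\nearrow\vec x\nwarrow\varpi_{\vec v_r}(\vec x)$ for $\vec v=\vec v_l\vee\vec v_r$; $\vec u\tilde\ltimes\vec v:=\varpi_{\vec u}(\vec v)\in\hat N^{nm}$. The order is componentwise: $\vec v\le\vec w$ iff $v_i\le w_i$ for all $i$, and $<$ means $\le$ and $\ne$. *)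

theory Defs
  imports Main
begin

text \<open>Names of planar rooted binary trees, as lists of naturals.
  The join: vl \<or> vr = (vl, 1, p+1+vr) where p = length vl.\<close>

definition join :: "nat list \<Rightarrow> nat list \<Rightarrow> nat list" where
  "join vl vr = vl @ [1] @ map (\<lambda>w. w + (length vl + 1)) vr"

text \<open>Nhat n: the names with n internal vertices, defined recursively as in the paper.\<close>
inductive is_name :: "nat \<Rightarrow> nat list \<Rightarrow> bool" where
  name_leaf: "is_name 0 []"
| name_join: "\<lbrakk> is_name p vl; is_name q vr \<rbrakk> \<Longrightarrow> is_name (p + q + 1) (join vl vr)"

definition Nhat :: "nat \<Rightarrow> nat list set" where
  "Nhat n = {v. is_name n v}"

text \<open>Planar binary tree skeletons; a name is uniquely the name of such a tree.\<close>
datatype btree = Leaf | Node btree btree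

fun tname :: "btree \<Rightarrow> nat list" where
  "tname Leaf = []"
| "tname (Node l r) = join (tname l) (tname r)"

definition tri :: "nat \<Rightarrow> nat \<Rightarrow> nat" where
  "tri n a = (if a = 1 then 1 else a + n)"

definition nearrow :: "nat list \<Rightarrow> nat list \<Rightarrow> nat list" where
  "nearrow v w = v @ map (tri (length v)) w"

definition nwarrow :: "nat list \<Rightarrow> nat list \<Rightarrow> nat list" where
  "nwarrow v w = v @ map (\<lambda>a. a + length v) w"

fun varpi_t :: "btree \<Rightarrow> nat list \<Rightarrow> nat list" where
  "varpi_t Leaf x = []"
| "varpi_t (Node l r) x = nwarrow (nearrow (varpi_t l x) x) (varpi_t r x)"

definition varpi :: "nat list \<Rightarrow> nat list \<Rightarrow> nat list" where
  "varpi v x = varpi_t (THE t. tname t = v) x"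

definition tltimes :: "nat list \<Rightarrow> nat list \<Rightarrow> nat list" where
  "tltimes u v = varpi u v"

definition cw_le :: "nat list \<Rightarrow> nat list \<Rightarrow> bool" where
  "cw_le v w \<longleftrightarrow> length v = length w \<and> (\<forall>i<length v. v ! i \<le> w ! i)"

definition cw_less :: "nat list \<Rightarrow> nat list \<Rightarrow> bool" where
  "cw_less v w \<longleftrightarrow> cw_le v w \<and> v \<noteq> w"

end

theory Submission
  imports Defs
begin

(* Unfolding the recursion for varpi, x \<ltimes> a (with m = |a|) is the concatenation of n blocks;
   block k (counted from 0) is a with every entry 1 replaced by 1 + m (x_k - 1) and every other
   entry e replaced by e + m k.  In a name 1 \<le> x_k \<le> k + 1, so each block is monotone in a and the
   first block is a itself, which gives (i).  Since a starts with 1, block k starts with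
   1 + m (x_k - 1) and is otherwise independent of x, which gives (ii).  The strict comparisons
   follow from the non-strict ones by antisymmetry. *)

(* Entry i of a name (counted from 0) lies in [1, i + 1]; admissible k constrains the entries
   from position k on. *)
fun admissible :: "nat \<Rightarrow> nat list \<Rightarrow> bool" where
  "admissible k [] \<longleftrightarrow> True"
| "admissible k (x # xs) \<longleftrightarrow> 1 \<le> x \<and> x \<le> k + 1 \<and> admissible (k + 1) xs"

lemma admissible_append:
  "admissible k (xs @ ys) \<longleftrightarrow> admissible k xs \<and> admissible (k + length xs) ys"
  by (induction xs arbitrary: k) auto

lemma admissible_shift:
  "admissible k xs \<Longrightarrow> admissible (k + c) (map (\<lambda>w. w + c) xs)"
  by (induction xs arbitrary: k) (simp_all, metis add_Suc)

lemma admissible_pos: "admissible k xs \<Longrightarrow> e \<in> set xs \<Longrightarrow> 1 \<le> e"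
  by (induction xs arbitrary: k) auto

lemma admissible_join:
  assumes "admissible 0 vl" "admissible 0 vr"
  shows "admissible 0 (join vl vr)"
  using assms admissible_shift[OF assms(2), of "length vl + 1"]
  by (simp add: join_def admissible_append)

lemma admissible_tname: "admissible 0 (tname t)"
  by (induction t) (simp_all add: admissible_join)

lemma append_Cons_eq_last_occurrence:
  "\<lbrakk> xs @ x # ys = xs' @ x # ys'; x \<notin> set ys; x \<notin> set ys' \<rbrakk> \<Longrightarrow> xs = xs' \<and> ys = ys'"
proof (induction xs arbitrary: xs')
  case Nil
  then show ?case by (cases xs') auto
next
  case (Cons a xs)
  then show ?case by (cases xs') auto
qed

lemma tname_inj: "tname t = tname t' \<Longrightarrow> t = t'"
proof (induction t arbitrary: t')
  case Leaf
  then show ?case by (cases t') (auto simp: join_def)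
next
  case (Node l r)
  then obtain l' r' where t': "t' = Node l' r'"
    by (cases t') (auto simp: join_def)
  \<comment> \<open>The 1 inserted by join is the last 1 of the name, so it locates the split.\<close>
  let ?shift = "\<lambda>l. map (\<lambda>w. w + (length (tname l) + 1))"
  have "tname l @ 1 # ?shift l (tname r) = tname l' @ 1 # ?shift l' (tname r')"
    using Node.prems t' by (simp add: join_def)
  moreover have "1 \<notin> set (?shift l (tname r))" "1 \<notin> set (?shift l' (tname r'))"
    using admissible_pos[OF admissible_tname] by fastforce+
  ultimately have "tname l = tname l'" "?shift l (tname r) = ?shift l (tname r')"
    by (auto dest: append_Cons_eq_last_occurrence)
  then have "tname l = tname l'" "tname r = tname r'"
    by (auto simp: inj_def intro: inj_map_eq_map[THEN iffD1])
  then show ?case using Node.IH t' by simp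
qed

lemma is_name_tname: "is_name n v \<Longrightarrow> \<exists>t. tname t = v \<and> length v = n"
proof (induction rule: is_name.induct)
  case name_leaf
  show ?case by (auto intro: exI[of _ Leaf])
next
  case (name_join p vl q vr)
  then obtain tl tr where "tname tl = vl" "length vl = p" "tname tr = vr" "length vr = q"
    by blast
  then show ?case by (auto simp: join_def intro!: exI[of _ "Node tl tr"])
qed

lemma is_name_admissible: "is_name n v \<Longrightarrow> admissible 0 v"
  using is_name_tname admissible_tname by blast

lemma length_is_name: "is_name n v \<Longrightarrow> length v = n"
  using is_name_tname by blast

lemma varpi_tname: "varpi (tname t) x = varpi_t t x"
proof -
  have "(THE t'. tname t' = tname t) = t"
    using tname_inj by blast
  then show ?thesis by (simp add: varpi_def)
qed

definition block :: "nat \<Rightarrow> nat \<Rightarrow> nat \<Rightarrow> nat list \<Rightarrow> nat list" where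
  "block m k x a = map (\<lambda>e. if e = 1 then 1 + m * (x - 1) else e + m * k) a"

fun blocks :: "nat \<Rightarrow> nat \<Rightarrow> nat list \<Rightarrow> nat list \<Rightarrow> nat list" where
  "blocks m k [] a = []"
| "blocks m k (x # xs) a = block m k x a @ blocks m (k + 1) xs a"

lemma blocks_append: "blocks m k (xs @ ys) a = blocks m k xs a @ blocks m (k + length xs) ys a"
  by (induction xs arbitrary: k) auto

lemma length_blocks: "length (blocks m k xs a) = length xs * length a"
  by (induction xs arbitrary: k) (auto simp: block_def)

lemma map_add_blocks:
  "\<forall>e\<in>set xs. 1 \<le> e \<Longrightarrow>
   map (\<lambda>e. e + c * m) (blocks m k xs a) = blocks m (k + c) (map (\<lambda>w. w + c) xs) a"
  by (induction xs arbitrary: k) (auto simp: block_def algebra_simps)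

lemma varpi_t_eq_blocks: "varpi_t t a = blocks (length a) 0 (tname t) a"
proof (induction t)
  case Leaf
  show ?case by simp
next
  case (Node l r)
  let ?m = "length a" and ?p = "length (tname l)"
  have "nearrow (varpi_t l a) a = blocks ?m 0 (tname l) a @ block ?m ?p 1 a"
    using Node.IH(1) by (auto simp: nearrow_def length_blocks block_def tri_def mult.commute)
  moreover have "map (\<lambda>e. e + (?p + 1) * ?m) (blocks ?m 0 (tname r) a)
      = blocks ?m (?p + 1) (map (\<lambda>w. w + (?p + 1)) (tname r)) a"
    using map_add_blocks[of "tname r" "?p + 1" ?m 0 a] admissible_pos[OF admissible_tname[of r]]
    by simp
  ultimately have "varpi_t (Node l r) a = blocks ?m 0 (tname l) a @ block ?m ?p 1 a @
      blocks ?m (?p + 1) (map (\<lambda>w. w + (?p + 1)) (tname r)) a"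
    using Node.IH(2) by (simp add: nwarrow_def length_blocks block_def algebra_simps)
  then show ?case by (simp add: join_def blocks_append)
qed

lemma tltimes_eq_blocks: "is_name n x \<Longrightarrow> tltimes x a = blocks (length a) 0 x a"
  using is_name_tname varpi_tname varpi_t_eq_blocks by (metis tltimes_def)

lemma block_mono:
  assumes "x \<le> k + 1" "\<forall>e\<in>set a. 1 \<le> e" "list_all2 (\<le>) a b"
  shows "list_all2 (\<le>) (block m k x a) (block m k x b)"
proof -
  have mk: "m * (x - 1) \<le> m * k"
    using assms(1) by (intro mult_le_mono2) simp
  have "(if e = 1 then 1 + m * (x - 1) else e + m * k)
      \<le> (if f = 1 then 1 + m * (x - 1) else f + m * k)" if "1 \<le> e" "e \<le> f" for e f
    using that mk by (cases "e = 1"; cases "f = 1") (simp_all only: if_True if_False simp_thms; linarith)+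
  then show ?thesis
    using assms(2,3) by (auto simp: block_def list_all2_conv_all_nth)
qed

lemma blocks_mono:
  "\<lbrakk> admissible k xs; \<forall>e\<in>set a. 1 \<le> e; list_all2 (\<le>) a b \<rbrakk>
   \<Longrightarrow> list_all2 (\<le>) (blocks m k xs a) (blocks m k xs b)"
  by (induction xs arbitrary: k) (simp_all add: list_all2_appendI block_mono)

lemma block_le_iff:
  assumes "1 \<le> x" "1 \<le> y" "1 \<le> m"
  shows "list_all2 (\<le>) (block m k x (1 # a)) (block m k y (1 # a)) \<longleftrightarrow> x \<le> y"
proof -
  have "list_all2 (\<le>) (block m k x (1 # a)) (block m k y (1 # a))
      \<longleftrightarrow> m * (x - 1) \<le> m * (y - 1)"
    by (auto simp: block_def list_all2_map1 list_all2_map2 intro: list_all2_refl)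
  also have "\<dots> \<longleftrightarrow> x \<le> y"
    using assms by auto
  finally show ?thesis .
qed

lemma blocks_le_iff:
  "\<lbrakk> \<forall>e\<in>set xs. 1 \<le> e; \<forall>e\<in>set ys. 1 \<le> e; length xs = length ys; 1 \<le> m \<rbrakk>
   \<Longrightarrow> list_all2 (\<le>) (blocks m k xs (1 # a)) (blocks m k ys (1 # a)) \<longleftrightarrow> list_all2 (\<le>) xs ys"
proof (induction xs arbitrary: ys k)
  case Nil
  then show ?case by simp
next
  case (Cons x xs)
  then obtain y ys' where ys: "ys = y # ys'"
    by (cases ys) auto
  have "length (block m k x (1 # a)) = length (block m k y (1 # a))"
    by (simp add: block_def)
  then show ?case
    using Cons ys block_le_iff[of x y m k a] by (simp add: list_all2_append)
qed

lemma cw_le_iff_list_all2: "cw_le v w \<longleftrightarrow> list_all2 (\<le>) v w"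
  by (auto simp: cw_le_def list_all2_conv_all_nth)

lemma cw_le_refl: "cw_le v v"
  by (simp add: cw_le_def)

lemma cw_le_antisym: "cw_le v w \<Longrightarrow> cw_le w v \<Longrightarrow> v = w"
  by (auto simp: cw_le_def intro!: nth_equalityI intro: order.antisym)

lemma cw_less_iff_if_cw_le_iff:
  assumes "cw_le v' w' \<longleftrightarrow> cw_le v w" "cw_le w' v' \<longleftrightarrow> cw_le w v"
  shows "cw_less v' w' \<longleftrightarrow> cw_less v w"
  using assms cw_le_refl cw_le_antisym unfolding cw_less_def by metis

lemma tltimes_le_iff_right:
  assumes "is_name n x" "1 \<le> n" "is_name m a" "is_name m b"
  shows "cw_le (tltimes x a) (tltimes x b) \<longleftrightarrow> cw_le a b"
proof -
  obtain x' where x: "x = 1 # x'" and "admissible 1 x'"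
    using is_name_admissible[OF assms(1)] length_is_name[OF assms(1)] assms(2)
    by (cases x) auto
  then have "tltimes x c = c @ blocks m 1 x' c" if "is_name m c" for c
    using tltimes_eq_blocks[OF assms(1)] length_is_name[OF that] by (simp add: block_def map_idI)
  moreover have "\<forall>e\<in>set a. 1 \<le> e"
    using admissible_pos is_name_admissible assms(3) by blast
  ultimately show ?thesis
    using assms(3,4) length_is_name blocks_mono[OF \<open>admissible 1 x'\<close>]
    by (auto simp: cw_le_iff_list_all2 list_all2_append)
qed

lemma tltimes_le_iff_left:
  assumes "is_name n x" "is_name n y" "is_name m a" "1 \<le> m"
  shows "cw_le (tltimes x a) (tltimes y a) \<longleftrightarrow> cw_le x y"
proof -
  obtain a' where a: "a = 1 # a'"
    using is_name_admissible[OF assms(3)] length_is_name[OF assms(3)] assms(4)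
    by (cases a) auto
  have "\<forall>e\<in>set x. 1 \<le> e" "\<forall>e\<in>set y. 1 \<le> e"
    using admissible_pos is_name_admissible assms(1,2) by blast+
  then show ?thesis
    using blocks_le_iff length_is_name[OF assms(1)] length_is_name[OF assms(2)]
      length_is_name[OF assms(3)] tltimes_eq_blocks[OF assms(1)] tltimes_eq_blocks[OF assms(2)]
      assms(4) a
    by (simp add: cw_le_iff_list_all2)
qed

theorem mainTheorem9:
  fixes n m :: nat and x y a b :: "nat list"
  assumes "n \<ge> 1" and "m \<ge> 1"
    and "x \<in> Nhat n" and "y \<in> Nhat n" and "a \<in> Nhat m" and "b \<in> Nhat m"
  shows "(cw_less (tltimes x a) (tltimes x b) \<longleftrightarrow> cw_less a b)
       \<and> (cw_less (tltimes x a) (tltimes y a) \<longleftrightarrow> cw_less x y)"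
proof -
  have names: "is_name n x" "is_name n y" "is_name m a" "is_name m b"
    using assms(3-6) by (simp_all add: Nhat_def)
  have "cw_less (tltimes x a) (tltimes x b) \<longleftrightarrow> cw_less a b"
    using names assms(1) by (intro cw_less_iff_if_cw_le_iff tltimes_le_iff_right)
  moreover have "cw_less (tltimes x a) (tltimes y a) \<longleftrightarrow> cw_less x y"
    using names assms(2) by (intro cw_less_iff_if_cw_le_iff tltimes_le_iff_left)
  ultimately show ?thesis ..
qed

end
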